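(* Let $A, B \in M_n(\mathbb{C})$ be such that the map $\gamma_1 : \mathrm{Sp}(e^A) \times \mathrm{Sp}(e^B) \to \mathbb{C}$, $(\lambda,\mu) \mapsto \lambda\mu$, is injective, and such that either (i) $e^{kA+lB} = e^{kA}e^{lB}$ for all $(k,l)\in\mathbb{Z}^2$, or (ii) $e^{kA+B} = e^{kA}e^{B} = e^{B}e^{kA}$ for all $k \in \mathbb{N}$. Then every characteristic subspace of $e^A$ and every characteristic subspace of $e^B$ is invariant under both $A$ and $B$.
   Context: $e^M$ denotes the matrix exponential; $\mathrm{Sp}(M)$ is the set of eigenvalues of $M$; $\mathbb{N}$ is the set of non-negative integers. For $M \in M_n(\mathbb{C})$ and $\lambda \in \mathbb{C}$, the characteristic subspace of $M$ for $\lambda$ is $\ker (M - \lambda I_n)^n$. *)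

theory Defs
  imports "HOL-Analysis.Analysis"
begin

primrec mpow :: "complex^'n^'n \<Rightarrow> nat \<Rightarrow> complex^'n^'n" where
  "mpow M 0 = mat 1"
| "mpow M (Suc k) = M ** mpow M k"

definition mat_exp :: "complex^'n^'n \<Rightarrow> complex^'n^'n" where
  "mat_exp M = (\<Sum>k. (1 / fact k) *\<^sub>R mpow M k)"

definition mat_spectrum :: "complex^'n^'n \<Rightarrow> complex set" where
  "mat_spectrum M = {c. \<exists>v. v \<noteq> 0 \<and> M *v v = c *s v}"

definition char_subspace :: "complex^'n^'n \<Rightarrow> complex \<Rightarrow> (complex^'n) set" where
  "char_subspace M c = {v. mpow (M - mat c) CARD('n) *v v = 0}"

end

theory Submission
  imports Defs "HOL-Computational_Algebra.Fundamental_Theorem_Algebra"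
begin

(* Put X = e^A, Y = e^B.  Either hypothesis gives X Y = Y X and e^(A+B) = X Y
   (in case (i) one needs e^M e^(-M) = I, proved from the Cauchy product of the exponential
   series); moreover every matrix commutes with its own exponential, so A commutes with X,
   B with Y and A + B with X Y.  A commuting matrix preserves every characteristic subspace,
   so it remains to show that B preserves the characteristic subspaces of X (and, by symmetry,
   A those of Y).  Decomposing a vector of ker (X - c)^n along the characteristic subspaces of
   Y, each component lies in a joint characteristic subspace of (X, Y) for a pair (c, m), hence
   in the characteristic subspace of X Y for c m.  Injectivity of (x, y) |-> x y on
   Sp X \<times> Sp Y forces that characteristic subspace of X Y to lie inside ker (X - c)^n; as A + B
   preserves it and A preserves ker (X - c)^n, so does B. *)

section \<open>Matrix algebra and matrix powers\<close>

lemma mat_commute: "(mat a :: 'a::comm_ring_1^'n^'n) ** M = M ** mat a"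
  by (simp add: vec_eq_iff matrix_matrix_mult_def mat_def if_distrib[where f="\<lambda>x. x * _"]
      if_distrib[where f="\<lambda>x. _ * x"] mult.commute cong: if_cong)

lemma mat_mult_vector: "(mat a :: 'a::comm_ring_1^'n^'n) *v v = a *s v"
  by (simp add: vec_eq_iff matrix_vector_mult_def mat_def if_distrib[where f="\<lambda>x. x * _"] cong: if_cong)

lemma mat_mult_mat: "(mat a :: 'a::comm_ring_1^'n^'n) ** mat b = mat (a * b)"
  by (simp add: vec_eq_iff matrix_matrix_mult_def mat_def if_distrib[where f="\<lambda>x. x * _"] cong: if_cong)

lemma matrix_diff_ldistrib: "(A::'a::ring_1^'n^'m) ** (B - C) = A ** B - A ** C"
  by (simp add: vec_eq_iff matrix_matrix_mult_def sum_subtractf right_diff_distrib)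

lemma matrix_diff_rdistrib: "((B - C)::'a::ring_1^'n^'m) ** A = B ** A - C ** A"
  by (simp add: vec_eq_iff matrix_matrix_mult_def sum_subtractf left_diff_distrib)

lemma matrix_add_rdistrib: "((B + C)::'a::semiring_1^'n^'m) ** A = B ** A + C ** A"
  by (simp add: vec_eq_iff matrix_matrix_mult_def sum.distrib distrib_right)

lemma matrix_vector_mult_scale: "(A::'a::comm_ring_1^'n^'m) *v (c *s x) = c *s (A *v x)"
  by (simp add: vec_eq_iff matrix_vector_mult_def sum_distrib_left mult_ac)

lemma matrix_vector_mult_sum: "(A::'a::comm_ring_1^'n^'m) *v (\<Sum>i\<in>I. f i) = (\<Sum>i\<in>I. A *v f i)"
  by (induction I rule: infinite_finite_induct) (simp_all add: matrix_vector_right_distrib)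

lemma mpow_add: "mpow M (a + b) = mpow M a ** mpow M b"
  by (induction a) (simp_all add: matrix_mul_assoc)

lemma mpow_Suc_right: "mpow M (Suc k) = mpow M k ** M"
  using mpow_add[of M k 1] by simp

lemma mpow_Suc_apply: "mpow M (Suc k) *v v = mpow M k *v (M *v v)"
  by (simp only: mpow_Suc_right matrix_vector_mul_assoc)

lemma mpow_kernel_mono: "a \<le> b \<Longrightarrow> mpow T a *v x = 0 \<Longrightarrow> mpow T b *v x = 0"
  using mpow_add[of T "b - a" a] by (simp flip: matrix_vector_mul_assoc)

lemma commute_mpow: "S ** M = M ** S \<Longrightarrow> S ** mpow M k = mpow M k ** S"
  by (induction k) (simp_all add: matrix_mul_assoc, metis matrix_mul_assoc)

lemma commute_diff_mat: "(S::'a::comm_ring_1^'n^'n) ** M = M ** S \<Longrightarrow> S ** (M - mat a) = (M - mat a) ** S"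
  by (simp add: matrix_diff_ldistrib matrix_diff_rdistrib mat_commute)

lemma mpow_mult_commute: "A ** B = B ** A \<Longrightarrow> mpow (A ** B) k = mpow A k ** mpow B k"
proof (induction k)
  case 0 then show ?case by simp
next
  case (Suc k)
  have c: "B ** mpow A k = mpow A k ** B"
    using commute_mpow[of B A k] Suc.prems by simp
  have "mpow (A ** B) (Suc k) = A ** (B ** mpow A k) ** mpow B k"
    using Suc by (simp add: matrix_mul_assoc)
  also have "\<dots> = mpow A (Suc k) ** mpow B (Suc k)"
    by (simp add: c matrix_mul_assoc)
  finally show ?case .
qed

text \<open>If \<open>a^p\<close> and \<open>b^q\<close> kill \<open>v\<close> and \<open>a\<close>, \<open>b\<close> commute, then \<open>(a + b)^(p+q)\<close> kills \<open>v\<close>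
  (the binomial argument, done by induction on \<open>p + q\<close>).\<close>
lemma commuting_nilpotent_sum:
  fixes a b :: "complex^'n^'n"
  assumes ab: "a ** b = b ** a"
  shows "mpow a p *v v = 0 \<Longrightarrow> mpow b q *v v = 0 \<Longrightarrow> mpow (a + b) (p + q) *v v = 0"
proof (induction "p + q" arbitrary: p q v)
  case 0 then show ?case by simp
next
  case (Suc n)
  show ?case
  proof (cases "p = 0 \<or> q = 0")
    case True
    with Suc.prems have "v = 0" by auto
    thus ?thesis by simp
  next
    case False
    then obtain p' q' where pq: "p = Suc p'" "q = Suc q'" by (metis not0_implies_Suc)
    have swap: "S ** M = M ** S \<Longrightarrow> S *v (M *v v) = M *v (S *v v)" for S M :: "complex^'n^'n"
      by (simp add: matrix_vector_mul_assoc)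
    have a1: "mpow a p' *v (a *v v) = 0" using Suc.prems(1) pq by (simp add: mpow_Suc_apply del: mpow.simps)
    have a2: "mpow b q *v (a *v v) = 0"
      using commute_mpow[of a b q] ab Suc.prems(2) by (metis swap matrix_vector_mult_0_right)
    have b1: "mpow a p *v (b *v v) = 0"
      using commute_mpow[of b a p] ab Suc.prems(1) by (metis swap matrix_vector_mult_0_right)
    have b2: "mpow b q' *v (b *v v) = 0" using Suc.prems(2) pq by (simp add: mpow_Suc_apply del: mpow.simps)
    have "mpow (a + b) n *v (a *v v) = 0" using Suc.hyps(1)[of p' q] a1 a2 Suc.hyps(2) pq by simp
    moreover have "mpow (a + b) n *v (b *v v) = 0" using Suc.hyps(1)[of p q'] b1 b2 Suc.hyps(2) pq by simp
    moreover have "mpow (a + b) (p + q) *v v = mpow (a + b) n *v ((a + b) *v v)"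
      using Suc.hyps(2) by (metis mpow_Suc_apply)
    ultimately show ?thesis
      by (simp add: matrix_vector_mult_add_rdistrib matrix_vector_right_distrib)
  qed
qed

section \<open>Stabilisation of subspace chains\<close>

text \<open>An increasing chain of subspaces of \<open>\<complex>^n\<close> cannot grow strictly at each of its first
  \<open>n + 1\<close> steps, since the dimension would exceed \<open>n\<close>.\<close>
lemma subspace_chain_stabilises:
  fixes C :: "nat \<Rightarrow> (complex^'n) set"
  assumes sub: "\<And>k. vec.subspace (C k)" and mono: "\<And>k. C k \<subseteq> C (Suc k)"
  shows "\<exists>k\<le>CARD('n). C (Suc k) \<subseteq> C k"
proof (rule ccontr)
  assume "\<not> ?thesis"
  hence strict: "\<And>k. k \<le> CARD('n) \<Longrightarrow> C k \<subset> C (Suc k)" using mono by blast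
  have "k \<le> Suc CARD('n) \<Longrightarrow> k \<le> vec.dim (C k)" for k
  proof (induction k)
    case 0 then show ?case by simp
  next
    case (Suc k)
    have span_C: "vec.span (C j) = C j" for j using sub vec.span_eq_iff by blast
    have "vec.span (C k) \<subset> vec.span (C (Suc k))"
      unfolding span_C using strict[of k] Suc.prems by simp
    hence "vec.dim (C k) < vec.dim (C (Suc k))" by (rule vec.dim_psubset)
    with Suc show ?case by simp
  qed
  from this[of "Suc CARD('n)"] dim_subset_UNIV_cart_gen[of "C (Suc CARD('n))"] show False by simp
qed

text \<open>The kernels of the powers of \<open>T\<close> stop growing at the exponent \<open>n\<close>: this is why the
  characteristic subspace is defined with the exponent \<open>n\<close>.\<close>
lemma mpow_kernel_stabilises:
  fixes T :: "complex^'n^'n"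
  assumes "mpow T m *v x = 0" shows "mpow T CARD('n) *v x = 0"
proof -
  define C where "C k = {x. mpow T k *v x = 0}" for k
  have sub: "vec.subspace (C k)" for k
    by (auto simp: C_def vec.subspace_def matrix_vector_right_distrib matrix_vector_mult_scale)
  have mono: "C k \<subseteq> C (Suc k)" for k
    by (auto simp flip: matrix_vector_mul_assoc simp: C_def)
  obtain k where k: "k \<le> CARD('n)" "C (Suc k) \<subseteq> C k"
    using subspace_chain_stabilises[of C, OF sub mono] by blast
  have "C (k + j) \<subseteq> C k" for j
  proof (induction j)
    case 0 then show ?case by simp
  next
    case (Suc j)
    show ?case
    proof
      fix x assume "x \<in> C (k + Suc j)"
      hence "T *v x \<in> C k" using Suc by (simp add: C_def mpow_Suc_apply subset_iff del: mpow.simps)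
      hence "x \<in> C (Suc k)" by (simp add: C_def mpow_Suc_apply del: mpow.simps)
      thus "x \<in> C k" using k by blast
    qed
  qed
  moreover have "x \<in> C (k + m)" using assms mpow_kernel_mono[of m "k + m" T x] by (simp add: C_def)
  ultimately have "x \<in> C k" by blast
  thus ?thesis using mpow_kernel_mono[OF k(1)] by (simp add: C_def)
qed

lemma span_image_combination:
  fixes f :: "'i \<Rightarrow> complex^'n"
  assumes "y \<in> vec.span (f ` I)" "finite I"
  shows "\<exists>a. y = (\<Sum>i\<in>I. a i *s f i)"
proof -
  let ?L = "{y. \<exists>a. y = (\<Sum>i\<in>I. a i *s f i)}"
  have "vec.subspace ?L"
    unfolding vec.subspace_def
  proof (intro conjI allI ballI impI)
    show "0 \<in> ?L" by (auto intro!: exI[of _ "\<lambda>_. 0"])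
  next
    fix x y assume "x \<in> ?L" "y \<in> ?L"
    then obtain a b where "x = (\<Sum>i\<in>I. a i *s f i)" "y = (\<Sum>i\<in>I. b i *s f i)" by blast
    thus "x + y \<in> ?L"
      by (auto intro!: exI[of _ "\<lambda>i. a i + b i"] simp: vec.scale_left_distrib sum.distrib)
  next
    fix c x assume "x \<in> ?L"
    then obtain a where "x = (\<Sum>i\<in>I. a i *s f i)" by blast
    thus "c *s x \<in> ?L"
      by (auto intro!: exI[of _ "\<lambda>i. c * a i"] simp: vec.scale_sum_right)
  qed
  moreover have "f j \<in> ?L" if "j \<in> I" for j
  proof -
    have "(\<Sum>i\<in>I. (if i = j then 1 else 0) *s f i) = f j"
      using that assms(2) by (simp add: if_distrib[of "\<lambda>c. c *s _"] cong: if_cong)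
    thus ?thesis by (auto intro!: exI[of _ "\<lambda>i. if i = j then 1 else 0"])
  qed
  ultimately show ?thesis using vec.span_induct[OF assms(1)] by blast
qed

text \<open>Some power \<open>S^k x\<close> is a combination of the earlier ones (the Krylov chain stabilises).\<close>
lemma krylov_relation:
  fixes S :: "complex^'n^'n"
  shows "\<exists>k a. mpow S k *v x = (\<Sum>j<k. a j *s (mpow S j *v x))"
proof -
  define C where "C k = vec.span ((\<lambda>j. mpow S j *v x) ` {..<k})" for k
  have sub: "vec.subspace (C k)" for k unfolding C_def by (rule vec.subspace_span)
  have mono: "C k \<subseteq> C (Suc k)" for k unfolding C_def
    by (intro vec.span_mono image_mono) auto
  obtain k where k: "C (Suc k) \<subseteq> C k" using subspace_chain_stabilises[of C, OF sub mono] by blast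
  have "mpow S k *v x \<in> C (Suc k)" unfolding C_def by (intro vec.span_base) auto
  with k have "mpow S k *v x \<in> C k" by blast
  thus ?thesis unfolding C_def using span_image_combination[of _ "\<lambda>j. mpow S j *v x" "{..<k}"] by blast
qed

section \<open>Polynomials applied to vectors\<close>

definition poly_apply :: "complex^'n^'n \<Rightarrow> complex poly \<Rightarrow> complex^'n \<Rightarrow> complex^'n" where
  "poly_apply S p v = (\<Sum>i<Suc (degree p). coeff p i *s (mpow S i *v v))"

lemma poly_apply_bound:
  "degree p < m \<Longrightarrow> poly_apply S p v = (\<Sum>i<m. coeff p i *s (mpow S i *v v))"
  unfolding poly_apply_def by (rule sum.mono_neutral_left) (auto simp: coeff_eq_0)

lemma poly_apply_add: "poly_apply S (p + q) v = poly_apply S p v + poly_apply S q v"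
proof -
  define m where "m = Suc (max (degree p) (degree q))"
  have "degree (p + q) < m" using degree_add_le_max[of p q] by (simp add: m_def)
  thus ?thesis
    by (simp add: poly_apply_bound[of _ m] m_def vec.scale_left_distrib sum.distrib)
qed

lemma poly_apply_diff: "poly_apply S (p - q) v = poly_apply S p v - poly_apply S q v"
proof -
  define m where "m = Suc (max (degree p) (degree q))"
  have "degree (p - q) < m" using degree_diff_le_max[of p q] by (simp add: m_def)
  thus ?thesis
    by (simp add: poly_apply_bound[of _ m] m_def vec.scale_left_diff_distrib sum_subtractf)
qed

lemma poly_apply_smult: "poly_apply S (smult c p) v = c *s poly_apply S p v"
proof -
  have "degree (smult c p) < Suc (degree p)" using degree_smult_le[of c p] by simp
  thus ?thesis
    by (simp add: poly_apply_bound[of _ "Suc (degree p)"] vec.scale_sum_right)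
qed

lemma poly_apply_monom: "poly_apply S (monom c j) v = c *s (mpow S j *v v)"
proof -
  have "degree (monom c j) < Suc j" using degree_monom_le[of c j] by simp
  hence "poly_apply S (monom c j) v = (\<Sum>i<Suc j. coeff (monom c j) i *s (mpow S i *v v))"
    by (rule poly_apply_bound)
  also have "\<dots> = (\<Sum>i<Suc j. if i = j then c *s (mpow S i *v v) else 0)"
    by (rule sum.cong) (auto simp: coeff_monom)
  finally show ?thesis by simp
qed

lemma poly_apply_zero: "poly_apply S 0 v = 0"
  by (simp add: poly_apply_def)

lemma poly_apply_sum: "finite J \<Longrightarrow> poly_apply S (\<Sum>j\<in>J. p j) v = (\<Sum>j\<in>J. poly_apply S (p j) v)"
  by (induction J rule: finite_induct) (simp_all add: poly_apply_zero poly_apply_add)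

lemma poly_apply_one: "poly_apply S 1 v = v"
  by (simp add: poly_apply_def)

lemma poly_apply_pCons: "poly_apply S (pCons a p) v = a *s v + poly_apply S p (S *v v)"
proof -
  have "degree (pCons a p) < Suc (Suc (degree p))" by (simp add: degree_pCons_le le_imp_less_Suc)
  hence "poly_apply S (pCons a p) v
      = (\<Sum>i<Suc (Suc (degree p)). coeff (pCons a p) i *s (mpow S i *v v))"
    by (rule poly_apply_bound)
  also have "\<dots> = a *s v + (\<Sum>i<Suc (degree p). coeff p i *s (mpow S (Suc i) *v v))"
    by (subst sum.lessThan_Suc_shift) simp
  also have "(\<Sum>i<Suc (degree p). coeff p i *s (mpow S (Suc i) *v v)) = poly_apply S p (S *v v)"
    unfolding poly_apply_def by (simp add: mpow_Suc_apply del: mpow.simps)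
  finally show ?thesis .
qed

lemma poly_apply_vector_add: "poly_apply S p (u + w) = poly_apply S p u + poly_apply S p w"
  by (simp add: poly_apply_def matrix_vector_right_distrib vec.scale_right_distrib sum.distrib)

lemma poly_apply_vector_scale: "poly_apply S p (c *s u) = c *s poly_apply S p u"
  by (simp add: poly_apply_def matrix_vector_mult_scale vec.scale_sum_right mult.commute)

lemma poly_apply_linear_factor:
  "poly_apply S (p * [:-z, 1:]) v = poly_apply S p ((S - mat z) *v v)"
proof -
  have factor: "p * [:-z, 1:] = smult (-z) p + pCons 0 p"
    by (simp add: mult_pCons_right)
  have vector: "(S - mat z) *v v = S *v v + (-z) *s v"
    by (simp add: matrix_vector_mult_diff_rdistrib mat_mult_vector)
  show ?thesis
    unfolding factor vector poly_apply_add poly_apply_smult poly_apply_pCons poly_apply_vector_add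
      poly_apply_vector_scale by simp
qed

text \<open>Every vector is killed by some product of linear factors applied to \<open>S\<close>: take the
  monic Krylov relation and split it over \<open>\<complex>\<close>.\<close>
lemma linear_factors_annihilate:
  fixes S :: "complex^'n^'n"
  shows "\<exists>zs. poly_apply S (\<Prod>z\<leftarrow>zs. [:-z, 1:]) x = 0"
proof -
  obtain k a where ka: "mpow S k *v x = (\<Sum>j<k. a j *s (mpow S j *v x))"
    using krylov_relation by blast
  define q where "q = monom 1 k - (\<Sum>j<k. monom (a j) j)"
  have q0: "poly_apply S q x = 0"
    by (simp add: q_def poly_apply_diff poly_apply_sum poly_apply_monom ka)
  have "coeff q k = 1" by (simp add: q_def coeff_sum coeff_monom)
  hence lc: "lead_coeff q \<noteq> 0" by auto
  obtain rs where rs: "mset rs = proots q" using ex_mset by blast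
  have "q = smult (lead_coeff q) (\<Prod>x\<in>#proots q. [:-x, 1:])"
    using complex_poly_decompose_multiset[of q] by simp
  also have "(\<Prod>x\<in>#proots q. [:-x, 1:]) = (\<Prod>x\<leftarrow>rs. [:-x, 1:])"
    by (simp flip: rs prod_mset_prod_list)
  finally have "poly_apply S q x = lead_coeff q *s poly_apply S (\<Prod>x\<leftarrow>rs. [:-x, 1:]) x"
    by (metis poly_apply_smult)
  with q0 lc show ?thesis by (auto simp: vec.scale_eq_0_iff)
qed

section \<open>Characteristic subspaces\<close>

lemma char_subspace_iff:
  "v \<in> char_subspace T r \<longleftrightarrow> mpow (T - mat r) CARD('n) *v v = 0" for T :: "complex^'n^'n"
  by (simp add: char_subspace_def)

lemma char_subspace_zero: "0 \<in> char_subspace T r"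
  by (simp add: char_subspace_iff)

lemma char_subspace_diff:
  "u \<in> char_subspace T r \<Longrightarrow> w \<in> char_subspace T r \<Longrightarrow> u - w \<in> char_subspace T r"
  by (simp add: char_subspace_iff matrix_vector_mult_diff_distrib)

lemma char_subspace_scale: "u \<in> char_subspace T r \<Longrightarrow> c *s u \<in> char_subspace T r"
  by (simp add: char_subspace_iff matrix_vector_mult_scale)

lemma char_subspace_sum:
  "(\<And>i. i \<in> I \<Longrightarrow> f i \<in> char_subspace T r) \<Longrightarrow> (\<Sum>i\<in>I. f i) \<in> char_subspace T r"
  by (simp add: char_subspace_iff matrix_vector_mult_sum)

lemma commute_char_power:
  "S ** T = T ** S \<Longrightarrow> mpow (T - mat r) k ** S = S ** mpow (T - mat r) k"
  for S T :: "complex^'n^'n"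
  by (metis commute_mpow commute_diff_mat)

lemma char_subspace_invariant:
  "S ** T = T ** S \<Longrightarrow> v \<in> char_subspace T r \<Longrightarrow> S *v v \<in> char_subspace T r"
  for S T :: "complex^'n^'n"
  using commute_char_power[of S T r "CARD('n)"]
  by (simp add: char_subspace_iff matrix_vector_mul_assoc)
     (metis matrix_vector_mul_assoc matrix_vector_mult_0_right)

lemma char_subspace_step: "(S - mat z) *v x \<in> char_subspace S z \<Longrightarrow> x \<in> char_subspace S z"
  for S :: "complex^'n^'n"
  unfolding char_subspace_iff using mpow_kernel_stabilises[of "S - mat z" "Suc CARD('n)" x]
  by (simp add: mpow_Suc_apply del: mpow.simps)

text \<open>On \<open>ker (S - r)^n\<close> the matrix \<open>S - z\<close> (\<open>z \<noteq> r\<close>) is onto: it is \<open>N + (r - z)\<close> with \<open>N\<close>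
  nilpotent there, and the finite Neumann series \<open>\<Sum>k<n. (-1)^k N^k w / (r-z)^(k+1)\<close> inverts it.\<close>
lemma neumann_partial_sum:
  fixes N :: "complex^'n^'n"
  assumes a: "a \<noteq> 0"
  shows "N *v (\<Sum>k<m. ((-1)^k / a^(Suc k)) *s (mpow N k *v w))
         + a *s (\<Sum>k<m. ((-1)^k / a^(Suc k)) *s (mpow N k *v w))
       = w - ((-1)^m / a^m) *s (mpow N m *v w)"
proof (induction m)
  case 0 then show ?case by simp
next
  case (Suc m)
  let ?y = "\<Sum>k<m. ((-1)^k / a^(Suc k)) *s (mpow N k *v w)"
  let ?c = "(-1)^m / a^(Suc m)"
  let ?d = "(-1)^m / a^m"
  let ?e = "(-1)^(Suc m) / a^(Suc m)"
  have ac: "a * ?c = ?d" using a by (simp add: field_simps)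
  have ce: "?c = - ?e" by simp
  have "N *v (\<Sum>k<Suc m. ((-1)^k / a^(Suc k)) *s (mpow N k *v w))
        + a *s (\<Sum>k<Suc m. ((-1)^k / a^(Suc k)) *s (mpow N k *v w))
      = (N *v ?y + a *s ?y) + ?c *s (mpow N (Suc m) *v w) + (a * ?c) *s (mpow N m *v w)"
    by (simp add: matrix_vector_right_distrib matrix_vector_mult_scale vec.scale_right_distrib
        matrix_vector_mul_assoc vec.scale_scale algebra_simps)
  also have "\<dots> = (w - ?d *s (mpow N m *v w)) + (- ?e) *s (mpow N (Suc m) *v w) + ?d *s (mpow N m *v w)"
    unfolding Suc ac unfolding ce ..
  also have "\<dots> = w - ?e *s (mpow N (Suc m) *v w)"
    by (simp only: vec.scale_minus_left) (simp add: algebra_simps)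
  finally show ?case .
qed

lemma char_subspace_shift_onto:
  fixes S :: "complex^'n^'n"
  assumes "r \<noteq> z" "w \<in> char_subspace S r"
  shows "\<exists>y. y \<in> char_subspace S r \<and> (S - mat z) *v y = w"
proof -
  define N where "N = S - mat r"
  define a where "a = r - z"
  have a: "a \<noteq> 0" using assms by (simp add: a_def)
  define y where "y = (\<Sum>k<CARD('n). ((-1)^k / a^(Suc k)) *s (mpow N k *v w))"
  have Nw: "mpow N CARD('n) *v w = 0" using assms(2) by (simp add: N_def char_subspace_iff)
  have "S - mat z = N + mat a"
    by (simp add: N_def a_def vec_eq_iff mat_def)
  hence "(S - mat z) *v y = N *v y + a *s y"
    by (simp add: matrix_vector_mult_add_rdistrib mat_mult_vector)
  also have "\<dots> = w"
    unfolding y_def using neumann_partial_sum[OF a, where m="CARD('n)" and w=w and N=N] Nw by simp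
  finally have "(S - mat z) *v y = w" .
  moreover have "y \<in> char_subspace S r"
    unfolding y_def
  proof (intro char_subspace_sum char_subspace_scale)
    fix k
    have "mpow N k ** S = S ** mpow N k"
      unfolding N_def by (rule commute_char_power) simp
    thus "mpow N k *v w \<in> char_subspace S r" using char_subspace_invariant assms(2) by metis
  qed
  ultimately show ?thesis by blast
qed

definition char_subspace_sum_of :: "complex^'n^'n \<Rightarrow> complex set \<Rightarrow> (complex^'n) set" where
  "char_subspace_sum_of S F =
     {v. \<exists>w. (\<forall>r\<in>F. w r \<in> char_subspace S r) \<and> v = (\<Sum>r\<in>F. w r)}"

text \<open>A vector killed by \<open>\<Prod>z\<in>zs. (S - z)\<close> lies in the sum of the characteristic subspaces
  for \<open>zs\<close>; induction on \<open>zs\<close>, peeling off one factor with the onto-property above.\<close>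
lemma annihilated_in_char_subspace_sum:
  fixes S :: "complex^'n^'n"
  shows "poly_apply S (\<Prod>z\<leftarrow>zs. [:-z, 1:]) v = 0 \<Longrightarrow> v \<in> char_subspace_sum_of S (set zs)"
proof (induction zs arbitrary: v)
  case Nil then show ?case by (simp add: char_subspace_sum_of_def poly_apply_one)
next
  case (Cons z zs)
  have "(\<Prod>z\<leftarrow>z#zs. [:-z, 1:]) = (\<Prod>z\<leftarrow>zs. [:-z, 1:]) * [:-z, 1:]" by simp
  hence "poly_apply S (\<Prod>z\<leftarrow>zs. [:-z, 1:]) ((S - mat z) *v v) = 0"
    using Cons.prems by (metis poly_apply_linear_factor)
  then obtain w where w: "\<forall>r\<in>set zs. w r \<in> char_subspace S r" "(S - mat z) *v v = (\<Sum>r\<in>set zs. w r)"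
    using Cons.IH unfolding char_subspace_sum_of_def by blast
  have "\<forall>r\<in>set zs - {z}. \<exists>y. y \<in> char_subspace S r \<and> (S - mat z) *v y = w r"
    using char_subspace_shift_onto w(1) by blast
  then obtain y where y: "\<And>r. r\<in>set zs - {z} \<Longrightarrow> y r \<in> char_subspace S r \<and> (S - mat z) *v y r = w r"
    by metis
  define x where "x = v - (\<Sum>r\<in>set zs - {z}. y r)"
  have "(S - mat z) *v x = (\<Sum>r\<in>set zs. w r) - (\<Sum>r\<in>set zs - {z}. w r)"
    using y by (simp add: x_def matrix_vector_mult_diff_distrib matrix_vector_mult_sum w(2))
  also have "\<dots> = (if z \<in> set zs then w z else 0)"
    by (simp add: sum_diff1)
  finally have "(S - mat z) *v x \<in> char_subspace S z" using w(1) char_subspace_zero by auto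
  hence x: "x \<in> char_subspace S z" by (rule char_subspace_step)
  have "v = x + (\<Sum>r\<in>set zs - {z}. y r)" by (simp add: x_def)
  also have "\<dots> = (\<Sum>r\<in>insert z (set zs). (\<lambda>r. if r = z then x else y r) r)"
    by (subst sum.insert_remove) (auto intro!: sum.cong)
  finally show ?case unfolding char_subspace_sum_of_def using x y
    by (intro CollectI exI[of _ "\<lambda>r. if r = z then x else y r"]) auto
qed

lemma char_subspace_decomposition:
  fixes S :: "complex^'n^'n"
  obtains F w where "finite F" "\<forall>r\<in>F. w r \<in> char_subspace S r" "v = (\<Sum>r\<in>F. w r)"
proof -
  obtain zs where "poly_apply S (\<Prod>z\<leftarrow>zs. [:-z, 1:]) v = 0"
    using linear_factors_annihilate by blast
  hence "v \<in> char_subspace_sum_of S (set zs)" by (rule annihilated_in_char_subspace_sum)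
  thus ?thesis using that unfolding char_subspace_sum_of_def by blast
qed

lemma char_subspace_power_injective:
  fixes S :: "complex^'n^'n"
  shows "r \<noteq> a \<Longrightarrow> w \<in> char_subspace S r \<Longrightarrow> mpow (S - mat a) k *v w = 0 \<Longrightarrow> w = 0"
proof (induction k arbitrary: w)
  case 0 then show ?case by simp
next
  case (Suc k)
  have "(S - mat a) *v w \<in> char_subspace S r"
    by (rule char_subspace_invariant[OF _ Suc.prems(2)]) (use commute_diff_mat[of S S a] in simp)
  moreover have "mpow (S - mat a) k *v ((S - mat a) *v w) = 0"
    using Suc.prems(3) by (simp add: mpow_Suc_apply del: mpow.simps)
  ultimately have "(S - mat a) *v w = 0" using Suc.IH Suc.prems(1) by blast
  hence eigen: "(S - mat r) *v w = (a - r) *s w"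
    by (simp add: matrix_vector_mult_diff_rdistrib mat_mult_vector vec.scale_left_diff_distrib)
  have "mpow (S - mat r) j *v w = (a - r)^j *s w" for j
  proof (induction j)
    case 0 show ?case by simp
  next
    case (Suc j)
    have "mpow (S - mat r) (Suc j) *v w = mpow (S - mat r) j *v ((a - r) *s w)"
      by (simp only: mpow_Suc_apply eigen)
    then show ?case by (simp only: matrix_vector_mult_scale Suc.IH vec.scale_scale power_Suc)
  qed
  with Suc.prems(2) have "(a - r)^CARD('n) *s w = 0" by (simp add: char_subspace_iff)
  thus "w = 0" using Suc.prems(1) by (simp add: vec.scale_eq_0_iff)
qed

lemma char_subspace_sum_direct:
  fixes S :: "complex^'n^'n"
  assumes "finite F" "\<forall>r\<in>F. w r \<in> char_subspace S r" "(\<Sum>r\<in>F. w r) = 0"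
  shows "\<forall>r\<in>F. w r = 0"
  using assms
proof (induction F arbitrary: w rule: finite_induct)
  case empty then show ?case by simp
next
  case (insert a F)
  let ?M = "mpow (S - mat a) CARD('n)"
  have wa: "?M *v w a = 0" using insert.prems by (simp add: char_subspace_iff)
  have "0 = ?M *v (\<Sum>r\<in>insert a F. w r)" using insert.prems by simp
  also have "\<dots> = (\<Sum>r\<in>F. ?M *v w r)"
    using insert.hyps wa by (simp add: matrix_vector_mult_sum matrix_vector_right_distrib)
  finally have "(\<Sum>r\<in>F. ?M *v w r) = 0" by simp
  moreover have "\<forall>r\<in>F. ?M *v w r \<in> char_subspace S r"
    using insert.prems char_subspace_invariant[OF commute_char_power] by blast
  ultimately have "\<forall>r\<in>F. ?M *v w r = 0" using insert.IH[of "\<lambda>r. ?M *v w r"] by blast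
  hence "\<forall>r\<in>F. w r = 0"
    using char_subspace_power_injective insert.hyps(2) insert.prems(1) by (metis insertCI)
  moreover from this have "w a = 0" using insert.prems(2) insert.hyps by simp
  ultimately show ?case by simp
qed

lemma char_subspace_nonzero_eigenvalue:
  fixes S :: "complex^'n^'n"
  assumes "w \<in> char_subspace S r" "w \<noteq> 0"
  shows "r \<in> mat_spectrum S"
proof -
  have "mpow (S - mat r) k *v w = 0 \<Longrightarrow> w \<noteq> 0 \<Longrightarrow> r \<in> mat_spectrum S" for k w
  proof (induction k arbitrary: w)
    case 0 then show ?case by simp
  next
    case (Suc k)
    show ?case
    proof (cases "(S - mat r) *v w = 0")
      case True
      hence "S *v w = r *s w" by (simp add: matrix_vector_mult_diff_rdistrib mat_mult_vector)
      with Suc.prems(2) show ?thesis unfolding mat_spectrum_def by blast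
    next
      case False
      then show ?thesis using Suc.IH Suc.prems(1) by (simp add: mpow_Suc_apply del: mpow.simps)
    qed
  qed
  then show ?thesis using assms by (auto simp: char_subspace_iff)
qed

lemma char_components_in_char_subspace:
  fixes S R :: "complex^'n^'n"
  assumes "finite F" "\<forall>r\<in>F. w r \<in> char_subspace S r" "v = (\<Sum>r\<in>F. w r)"
    "R ** S = S ** R" "v \<in> char_subspace R \<rho>"
  shows "\<forall>r\<in>F. w r \<in> char_subspace R \<rho>"
proof -
  let ?M = "mpow (R - mat \<rho>) CARD('n)"
  have "(\<Sum>r\<in>F. ?M *v w r) = 0"
    using assms(3,5) by (simp add: matrix_vector_mult_sum char_subspace_iff)
  moreover have "\<forall>r\<in>F. ?M *v w r \<in> char_subspace S r"
    using assms(2) char_subspace_invariant[OF commute_char_power[OF assms(4)[symmetric]]] by blast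
  ultimately have "\<forall>r\<in>F. ?M *v w r = 0"
    using char_subspace_sum_direct[OF assms(1), where S=S and w="\<lambda>r. ?M *v w r"] by blast
  thus ?thesis by (simp add: char_subspace_iff)
qed

section \<open>Commuting matrices and their product\<close>

lemma commute_products:
  assumes "A ** C = C ** A" "A ** D = D ** A" "B ** C = C ** B" "B ** D = D ** B"
  shows "(A ** B) ** (C ** D) = (C ** D) ** (A ** B)"
proof -
  have "(A ** B) ** (C ** D) = A ** (B ** C) ** D" by (simp add: matrix_mul_assoc)
  also have "\<dots> = (A ** C) ** (B ** D)" by (simp add: assms(3) matrix_mul_assoc)
  also have "\<dots> = C ** (A ** D) ** B" by (simp only: assms(1,4) matrix_mul_assoc)
  also have "\<dots> = (C ** D) ** (A ** B)" by (simp only: assms(2) matrix_mul_assoc)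
  finally show ?thesis .
qed

text \<open>For commuting \<open>X\<close>, \<open>Y\<close>, the joint characteristic subspace for \<open>(c, m)\<close> lies in the
  characteristic subspace of \<open>X Y\<close> for \<open>c m\<close>, because
  \<open>X Y - c m = (X - c) Y + c (Y - m)\<close> is a sum of two commuting matrices nilpotent on it.\<close>
lemma char_subspace_product:
  fixes X Y :: "complex^'n^'n"
  assumes XY: "X ** Y = Y ** X" and v: "v \<in> char_subspace X c" "v \<in> char_subspace Y m"
  shows "v \<in> char_subspace (X ** Y) (c * m)"
proof -
  define a where "a = (X - mat c) ** Y"
  define b where "b = mat c ** (Y - mat m)"
  have h1: "Y ** (X - mat c) = (X - mat c) ** Y" by (rule commute_diff_mat) (simp add: XY)
  have h2: "X ** (Y - mat m) = (Y - mat m) ** X" by (rule commute_diff_mat) (simp add: XY)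
  have h3: "(Y - mat m) ** (X - mat c) = (X - mat c) ** (Y - mat m)" by (rule commute_diff_mat) (simp add: h2)
  have h4: "Y ** (Y - mat m) = (Y - mat m) ** Y" by (rule commute_diff_mat) simp
  have ab: "a ** b = b ** a" unfolding a_def b_def
    by (rule commute_products) (simp_all only: mat_commute[symmetric] h3[symmetric] h4)
  have "mpow a CARD('n) = mpow Y CARD('n) ** mpow (X - mat c) CARD('n)"
  proof -
    have "Y ** mpow (X - mat c) CARD('n) = mpow (X - mat c) CARD('n) ** Y"
      by (rule commute_mpow) (rule h1)
    hence "mpow (X - mat c) CARD('n) ** mpow Y CARD('n) = mpow Y CARD('n) ** mpow (X - mat c) CARD('n)"
      by (intro commute_mpow) simp
    thus ?thesis unfolding a_def using mpow_mult_commute[OF h1[symmetric]] by simp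
  qed
  hence "mpow a CARD('n) *v v = 0" using v(1) by (simp add: char_subspace_iff flip: matrix_vector_mul_assoc)
  moreover have "mpow b CARD('n) *v v = 0"
  proof -
    have "mpow b CARD('n) = mpow (mat c) CARD('n) ** mpow (Y - mat m) CARD('n)"
      unfolding b_def by (rule mpow_mult_commute) (rule mat_commute)
    thus ?thesis using v(2) by (simp add: char_subspace_iff flip: matrix_vector_mul_assoc)
  qed
  ultimately have "mpow (a + b) (CARD('n) + CARD('n)) *v v = 0" by (rule commuting_nilpotent_sum[OF ab])
  moreover have "a + b = X ** Y - mat (c * m)"
    by (simp add: a_def b_def matrix_diff_ldistrib matrix_diff_rdistrib mat_mult_mat)
  ultimately show ?thesis using mpow_kernel_stabilises by (auto simp: char_subspace_iff)
qed

text \<open>Decompose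
  \<open>w\<close> along \<open>X\<close> and each component along \<open>Y\<close>; a nonzero piece in the joint subspace for
  \<open>(l, r)\<close> lies in the characteristic subspace of \<open>X Y\<close> for both \<open>l r\<close> and \<open>c m\<close>, so
  \<open>l r = c m\<close> and hence \<open>l = c\<close>.\<close>
lemma char_subspace_product_inj:
  fixes X Y :: "complex^'n^'n"
  assumes XY: "X ** Y = Y ** X"
    and inj: "inj_on (\<lambda>(x, y). x * y) (mat_spectrum X \<times> mat_spectrum Y)"
    and c: "c \<in> mat_spectrum X" and m: "m \<in> mat_spectrum Y"
    and w: "w \<in> char_subspace (X ** Y) (c * m)"
  shows "w \<in> char_subspace X c"
proof -
  have PX: "(X ** Y) ** X = X ** (X ** Y)" by (metis XY matrix_mul_assoc)
  have PY: "(X ** Y) ** Y = Y ** (X ** Y)" by (metis XY matrix_mul_assoc)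
  obtain F u where F: "finite F" "\<forall>l\<in>F. u l \<in> char_subspace X l" "w = (\<Sum>l\<in>F. u l)"
    using char_subspace_decomposition[of X w] by blast
  have uP: "\<forall>l\<in>F. u l \<in> char_subspace (X ** Y) (c * m)"
    using char_components_in_char_subspace[OF F PX w] .
  have "u l = 0" if l: "l \<in> F" "l \<noteq> c" for l
  proof -
    obtain G t where G: "finite G" "\<forall>r\<in>G. t r \<in> char_subspace Y r" "u l = (\<Sum>r\<in>G. t r)"
      using char_subspace_decomposition[of Y "u l"] by blast
    have tX: "\<forall>r\<in>G. t r \<in> char_subspace X l"
      using char_components_in_char_subspace[OF G XY] F(2) l(1) by blast
    have tP: "\<forall>r\<in>G. t r \<in> char_subspace (X ** Y) (c * m)"
      using char_components_in_char_subspace[OF G PY] uP l(1) by blast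
    have "t r = 0" if r: "r \<in> G" for r
    proof (rule ccontr)
      assume nz: "t r \<noteq> 0"
      have lX: "l \<in> mat_spectrum X" using char_subspace_nonzero_eigenvalue tX r nz by blast
      have rY: "r \<in> mat_spectrum Y" using char_subspace_nonzero_eigenvalue G(2) r nz by blast
      have "l * r = c * m"
      proof (rule ccontr)
        assume "l * r \<noteq> c * m"
        moreover have "t r \<in> char_subspace (X ** Y) (l * r)"
          using char_subspace_product[OF XY] tX G(2) r by blast
        moreover have "mpow (X ** Y - mat (c * m)) CARD('n) *v t r = 0"
          using tP r by (simp add: char_subspace_iff)
        ultimately show False using char_subspace_power_injective nz by blast
      qed
      hence "(l, r) = (c, m)" using inj lX rY c m unfolding inj_on_def by auto
      thus False using l(2) by simp
    qed
    thus ?thesis using G(3) by simp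
  qed
  hence "\<forall>l\<in>F. u l \<in> char_subspace X c" using F(2) char_subspace_zero by metis
  thus ?thesis using F(3) char_subspace_sum by metis
qed

lemma char_subspace_invariant_from_product:
  fixes X Y A B :: "complex^'n^'n"
  assumes XY: "X ** Y = Y ** X" and AX: "A ** X = X ** A"
    and P: "(A + B) ** (X ** Y) = (X ** Y) ** (A + B)"
    and inj: "inj_on (\<lambda>(x, y). x * y) (mat_spectrum X \<times> mat_spectrum Y)"
    and v: "v \<in> char_subspace X c"
  shows "B *v v \<in> char_subspace X c"
proof -
  obtain F u where F: "finite F" "\<forall>m\<in>F. u m \<in> char_subspace Y m" "v = (\<Sum>m\<in>F. u m)"
    using char_subspace_decomposition[of Y v] by blast
  have uX: "\<forall>m\<in>F. u m \<in> char_subspace X c" using char_components_in_char_subspace[OF F XY v] .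
  have "B *v u m \<in> char_subspace X c" if m: "m \<in> F" for m
  proof (cases "u m = 0")
    case True then show ?thesis by (simp add: char_subspace_zero)
  next
    case False
    have c: "c \<in> mat_spectrum X" using char_subspace_nonzero_eigenvalue uX m False by blast
    have mY: "m \<in> mat_spectrum Y" using char_subspace_nonzero_eigenvalue F(2) m False by blast
    have "u m \<in> char_subspace (X ** Y) (c * m)" using char_subspace_product[OF XY] uX F(2) m by blast
    hence "(A + B) *v u m \<in> char_subspace (X ** Y) (c * m)" by (rule char_subspace_invariant[OF P])
    hence "(A + B) *v u m \<in> char_subspace X c" by (rule char_subspace_product_inj[OF XY inj c mY])
    moreover have "A *v u m \<in> char_subspace X c" using char_subspace_invariant[OF AX] uX m by blast
    ultimately have "(A + B) *v u m - A *v u m \<in> char_subspace X c" by (rule char_subspace_diff)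
    thus ?thesis by (simp add: matrix_vector_mult_add_rdistrib)
  qed
  thus ?thesis using F(3) by (simp add: matrix_vector_mult_sum char_subspace_sum)
qed

section \<open>The exponential series\<close>

lemma matrix_mult_scaleR_right: "(A::complex^'n^'m) ** (c *\<^sub>R B) = c *\<^sub>R (A ** B)"
  by (simp add: vec_eq_iff matrix_matrix_mult_def scaleR_sum_right)

lemma matrix_mult_scaleR_left: "(c *\<^sub>R A) ** (B::complex^'p^'n) = c *\<^sub>R (A ** B)"
  by (simp add: vec_eq_iff matrix_matrix_mult_def scaleR_sum_right)

lemma matrix_mult_bounded_bilinear:
  "bounded_bilinear ((**) :: complex^'n^'m \<Rightarrow> complex^'p^'n \<Rightarrow> complex^'p^'m)"
  unfolding bilinear_conv_bounded_bilinear[symmetric] bilinear_def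
  by (auto intro!: linearI simp: matrix_add_ldistrib matrix_add_rdistrib
      matrix_mult_scaleR_right matrix_mult_scaleR_left)

lemma norm_mpow_le:
  fixes M :: "complex^'n^'n"
  assumes K: "\<And>(a::complex^'n^'n) (b::complex^'n^'n). norm (a ** b) \<le> norm a * norm b * K" "K > 0"
  shows "norm (mpow M k) \<le> norm (mat 1 :: complex^'n^'n) * (K * norm M)^k"
proof (induction k)
  case 0 show ?case by simp
next
  case (Suc k)
  have "norm (mpow M (Suc k)) \<le> norm M * norm (mpow M k) * K"
    using K(1)[where a=M and b="mpow M k"] by simp
  also have "\<dots> \<le> norm M * (norm (mat 1 :: complex^'n^'n) * (K * norm M)^k) * K"
    using Suc K(2) by (intro mult_right_mono[OF mult_left_mono[OF Suc]]) auto
  also have "\<dots> = norm (mat 1 :: complex^'n^'n) * (K * norm M)^Suc k" by (simp only: power_Suc mult_ac)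
  finally show ?case .
qed

lemma summable_norm_exp_series:
  fixes M :: "complex^'n^'n"
  shows "summable (\<lambda>k. norm ((1 / fact k) *\<^sub>R mpow M k))"
proof -
  obtain K where K: "K > 0" "\<And>(a::complex^'n^'n) (b::complex^'n^'n). norm (a ** b) \<le> norm a * norm b * K"
    using bounded_bilinear.pos_bounded[OF matrix_mult_bounded_bilinear] by blast
  define bound where "bound k = norm (mat 1 :: complex^'n^'n) * (inverse (fact k) * (K * norm M)^k)" for k
  have "norm ((1 / fact k) *\<^sub>R mpow M k) \<le> bound k" for k
    using norm_mpow_le[OF K(2,1), of M k]
    by (simp add: bound_def divide_inverse mult_left_mono mult.left_commute)
  moreover have "summable bound"
    unfolding bound_def by (intro summable_mult summable_exp)
  ultimately show ?thesis
    by (intro summable_comparison_test[OF _ \<open>summable bound\<close>]) auto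
qed

text \<open>A matrix commuting with \<open>M\<close> commutes with \<open>e^M\<close> (term by term, the product being
  continuous and linear in each factor).\<close>
lemma commute_mat_exp:
  fixes S M :: "complex^'n^'n"
  assumes "S ** M = M ** S"
  shows "S ** mat_exp M = mat_exp M ** S"
proof -
  have summable: "summable (\<lambda>k. (1 / fact k) *\<^sub>R mpow M k)"
    by (rule summable_norm_cancel[OF summable_norm_exp_series])
  note bl = bounded_bilinear.bounded_linear_right[OF matrix_mult_bounded_bilinear]
    bounded_bilinear.bounded_linear_left[OF matrix_mult_bounded_bilinear]
  have "S ** mat_exp M = (\<Sum>k. S ** ((1 / fact k) *\<^sub>R mpow M k))"
    unfolding mat_exp_def by (rule bounded_linear.suminf[OF bl(1) summable])
  also have "\<dots> = (\<Sum>k. ((1 / fact k) *\<^sub>R mpow M k) ** S)"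
    using commute_mpow[OF assms] by (simp add: matrix_mult_scaleR_right matrix_mult_scaleR_left)
  also have "\<dots> = mat_exp M ** S"
    unfolding mat_exp_def by (rule bounded_linear.suminf[OF bl(2) summable, symmetric])
  finally show ?thesis .
qed

lemma summable_norm_entry:
  fixes a :: "nat \<Rightarrow> 'a::real_normed_vector^'n^'m"
  assumes "summable (\<lambda>k. norm (a k))"
  shows "summable (\<lambda>k. norm (a k $ i $ j))"
proof (rule summable_comparison_test[OF _ assms])
  have "norm (a k $ i $ j) \<le> norm (a k)" for k
    using Finite_Cartesian_Product.norm_nth_le[of "a k $ i" j]
      Finite_Cartesian_Product.norm_nth_le[of "a k" i] by linarith
  then show "\<exists>N. \<forall>k\<ge>N. norm (norm (a k $ i $ j)) \<le> norm (a k)" by auto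
qed

lemma sums_entry:
  fixes a :: "nat \<Rightarrow> 'a::real_normed_vector^'n^'m"
  assumes "a sums s"
  shows "(\<lambda>k. a k $ i $ j) sums (s $ i $ j)"
proof -
  have "(\<lambda>n. (\<Sum>k<n. a k) $ i $ j) \<longlonglongrightarrow> s $ i $ j"
    using assms unfolding sums_def by (intro tendsto_vec_nth)
  then show ?thesis unfolding sums_def by simp
qed

lemma sums_entrywise:
  fixes a :: "nat \<Rightarrow> 'a::real_normed_vector^'n^'m"
  assumes "\<And>i j. (\<lambda>k. a k $ i $ j) sums (s $ i $ j)"
  shows "a sums s"
  using assms unfolding sums_def by (intro vec_tendstoI) simp

text \<open>The Cauchy product formula for absolutely convergent matrix series, reduced entrywise to
  the scalar one.\<close>
lemma matrix_Cauchy_product_sums: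
  fixes a :: "nat \<Rightarrow> 'a::{real_normed_algebra,banach,semiring_1}^'n^'m"
    and b :: "nat \<Rightarrow> 'a^'p^'n"
  assumes a: "summable (\<lambda>k. norm (a k))" and b: "summable (\<lambda>k. norm (b k))"
  shows "(\<lambda>k. \<Sum>i\<le>k. a i ** b (k - i)) sums ((\<Sum>k. a k) ** (\<Sum>k. b k))"
proof (rule sums_entrywise)
  fix i j
  have entry_a: "(\<Sum>k. a k $ i $ l) = (\<Sum>k. a k) $ i $ l" for l
    using sums_entry[OF summable_sums[OF summable_norm_cancel[OF a]]] by (simp add: sums_iff)
  have entry_b: "(\<Sum>k. b k $ l $ j) = (\<Sum>k. b k) $ l $ j" for l
    using sums_entry[OF summable_sums[OF summable_norm_cancel[OF b]]] by (simp add: sums_iff)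
  have "(\<lambda>k. \<Sum>l\<in>UNIV. \<Sum>m\<le>k. a m $ i $ l * b (k - m) $ l $ j)
          sums (\<Sum>l\<in>UNIV. (\<Sum>k. a k $ i $ l) * (\<Sum>k. b k $ l $ j))"
    by (intro sums_sum Cauchy_product_sums summable_norm_entry a b)
  then show "(\<lambda>k. (\<Sum>m\<le>k. a m ** b (k - m)) $ i $ j) sums (((\<Sum>k. a k) ** (\<Sum>k. b k)) $ i $ j)"
    unfolding entry_a entry_b by (simp add: matrix_matrix_mult_def sum.swap[of _ UNIV])
qed

lemma mpow_uminus: "mpow (- M) j = (-1)^j *\<^sub>R mpow (M::complex^'n^'n) j"
proof (induction j)
  case 0 show ?case by simp
next
  case (Suc j)
  have "- M = (-1) *\<^sub>R M" by simp
  then show ?case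
    using Suc by (simp only: mpow.simps matrix_mult_scaleR_left matrix_mult_scaleR_right
        scaleR_scaleR power_Suc mult.commute)
qed

text \<open>The \<open>k\<close>-th Cauchy term of \<open>e^M e^(-M)\<close> is \<open>(1 + (-1))^k M^k / k!\<close>, i.e. \<open>I\<close> for \<open>k = 0\<close>
  and \<open>0\<close> otherwise.\<close>
lemma exp_series_cancel_term:
  fixes M :: "complex^'n^'n"
  shows "(\<Sum>i\<le>k. ((1 / fact i) *\<^sub>R mpow M i) ** ((1 / fact (k - i)) *\<^sub>R mpow (- M) (k - i)))
       = (if k = 0 then mat 1 else 0)"
proof -
  have cauchy_term: "((1 / fact i) *\<^sub>R mpow M i) ** ((1 / fact (k - i)) *\<^sub>R mpow (- M) (k - i))
      = (real (k choose i) * 1^i * (-1)^(k - i) / fact k) *\<^sub>R mpow M k" if i: "i \<le> k" for i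
  proof -
    have "real (k choose i) = fact k / (fact i * fact (k - i))" using i binomial_fact[of i k] by simp
    hence scalar: "1 / fact i * (1 / fact (k - i) * (-1)^(k - i))
        = real (k choose i) * 1^i * (-1)^(k - i) / (fact k :: real)"
      by (simp add: field_simps)
    have powers: "mpow M i ** mpow M (k - i) = mpow M k" using i mpow_add[of M i "k - i"] by simp
    have "((1 / fact i) *\<^sub>R mpow M i) ** ((1 / fact (k - i)) *\<^sub>R mpow (- M) (k - i))
        = (1 / fact i * (1 / fact (k - i) * (-1)^(k - i))) *\<^sub>R (mpow M i ** mpow M (k - i))"
      by (simp only: mpow_uminus matrix_mult_scaleR_left matrix_mult_scaleR_right scaleR_scaleR)
         (simp add: mult_ac)
    then show ?thesis by (simp only: powers scalar)
  qed
  have "(\<Sum>i\<le>k. ((1 / fact i) *\<^sub>R mpow M i) ** ((1 / fact (k - i)) *\<^sub>R mpow (- M) (k - i)))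
      = (\<Sum>i\<le>k. (real (k choose i) * 1^i * (-1)^(k - i) / fact k) *\<^sub>R mpow M k)"
    by (rule sum.cong) (simp_all add: cauchy_term)
  also have "\<dots> = ((\<Sum>i\<le>k. real (k choose i) * 1^i * (-1)^(k - i)) / fact k) *\<^sub>R mpow M k"
    by (simp only: sum_divide_distrib scaleR_sum_left)
  also have "(\<Sum>i\<le>k. real (k choose i) * 1^i * (-1)^(k - i)) = (1 + (-1))^k"
    by (rule binomial_ring[symmetric])
  finally show ?thesis by (cases k) simp_all
qed

lemma mat_exp_uminus_inverse: "mat_exp M ** mat_exp (- M) = (mat 1 :: complex^'n^'n)"
proof -
  have "(\<lambda>k. \<Sum>i\<le>k. ((1 / fact i) *\<^sub>R mpow M i) ** ((1 / fact (k - i)) *\<^sub>R mpow (- M) (k - i)))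
        sums (mat_exp M ** mat_exp (- M))"
    unfolding mat_exp_def
    by (rule matrix_Cauchy_product_sums[OF summable_norm_exp_series summable_norm_exp_series])
  hence "(\<lambda>k. if k = 0 then mat 1 else (0::complex^'n^'n)) sums (mat_exp M ** mat_exp (- M))"
    by (simp only: exp_series_cancel_term)
  moreover have "(\<lambda>k. if k = 0 then mat 1 else (0::complex^'n^'n)) sums mat 1"
    using sums_single[of 0 "\<lambda>_. mat 1 :: complex^'n^'n"] by simp
  ultimately show ?thesis by (rule sums_unique2)
qed

text \<open>Under
  (i), \<open>e^(A+B) = e^A e^B\<close> and \<open>e^(-(A+B)) = e^(-A) e^(-B)\<close>, so
  \<open>e^B e^A = e^B e^A e^(-A) e^(-B) e^(A+B) = e^(A+B)\<close>.\<close>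
lemma exponential_hypotheses_commute:
  fixes A B :: "complex^'n^'n"
  assumes "(\<forall>k l :: int. mat_exp (of_int k *\<^sub>R A + of_int l *\<^sub>R B)
                  = mat_exp (of_int k *\<^sub>R A) ** mat_exp (of_int l *\<^sub>R B))
         \<or> (\<forall>k :: nat. mat_exp (real k *\<^sub>R A + B) = mat_exp (real k *\<^sub>R A) ** mat_exp B
                  \<and> mat_exp (real k *\<^sub>R A) ** mat_exp B = mat_exp B ** mat_exp (real k *\<^sub>R A))"
  shows "mat_exp (A + B) = mat_exp A ** mat_exp B \<and> mat_exp A ** mat_exp B = mat_exp B ** mat_exp A"
  using assms
proof
  assume h: "\<forall>k l :: int. mat_exp (of_int k *\<^sub>R A + of_int l *\<^sub>R B)
                  = mat_exp (of_int k *\<^sub>R A) ** mat_exp (of_int l *\<^sub>R B)"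
  have sum: "mat_exp (A + B) = mat_exp A ** mat_exp B" using h[rule_format, of 1 1] by simp
  have neg: "mat_exp (- (A + B)) = mat_exp (- A) ** mat_exp (- B)"
    using h[rule_format, of "-1" "-1"] by (simp add: algebra_simps)
  have left_inverse: "mat_exp (- M) ** mat_exp M = mat 1" for M :: "complex^'n^'n"
    using mat_exp_uminus_inverse matrix_left_right_inverse by blast
  have cancel: "mat_exp (- A) ** mat_exp (- B) ** mat_exp (A + B) = mat 1"
    unfolding neg[symmetric] by (rule left_inverse)
  have "mat_exp B ** mat_exp A = mat_exp B ** mat_exp A ** (mat_exp (- A) ** mat_exp (- B) ** mat_exp (A + B))"
    by (simp add: cancel)
  also have "\<dots> = mat_exp B ** (mat_exp A ** mat_exp (- A)) ** mat_exp (- B) ** mat_exp (A + B)"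
    by (simp only: matrix_mul_assoc)
  also have "\<dots> = mat_exp (A + B)"
    by (simp add: mat_exp_uminus_inverse)
  finally show ?thesis using sum by simp
next
  assume h: "\<forall>k :: nat. mat_exp (real k *\<^sub>R A + B) = mat_exp (real k *\<^sub>R A) ** mat_exp B
                  \<and> mat_exp (real k *\<^sub>R A) ** mat_exp B = mat_exp B ** mat_exp (real k *\<^sub>R A)"
  show ?thesis using h[rule_format, of 1] by simp
qed

theorem mainTheorem10:
  fixes A B :: "complex^'n^'n"
  assumes inj: "inj_on (\<lambda>(x, y). x * y) (mat_spectrum (mat_exp A) \<times> mat_spectrum (mat_exp B))"
    and cond: "(\<forall>k l :: int. mat_exp (of_int k *\<^sub>R A + of_int l *\<^sub>R B)
                  = mat_exp (of_int k *\<^sub>R A) ** mat_exp (of_int l *\<^sub>R B))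
             \<or> (\<forall>k :: nat. mat_exp (real k *\<^sub>R A + B) = mat_exp (real k *\<^sub>R A) ** mat_exp B
                  \<and> mat_exp (real k *\<^sub>R A) ** mat_exp B = mat_exp B ** mat_exp (real k *\<^sub>R A))"
  shows "(\<forall>c. \<forall>v \<in> char_subspace (mat_exp A) c.
            A *v v \<in> char_subspace (mat_exp A) c \<and> B *v v \<in> char_subspace (mat_exp A) c)
       \<and> (\<forall>c. \<forall>v \<in> char_subspace (mat_exp B) c.
            A *v v \<in> char_subspace (mat_exp B) c \<and> B *v v \<in> char_subspace (mat_exp B) c)"
proof -
  define X Y where "X = mat_exp A" and "Y = mat_exp B"
  have P: "mat_exp (A + B) = X ** Y" and XY: "X ** Y = Y ** X"
    using exponential_hypotheses_commute[OF cond] by (simp_all add: X_def Y_def)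
  have AX: "A ** X = X ** A" and BY: "B ** Y = Y ** B"
    unfolding X_def Y_def by (simp_all add: commute_mat_exp)
  have ABP: "(A + B) ** (X ** Y) = (X ** Y) ** (A + B)"
    using commute_mat_exp[of "A + B" "A + B"] by (simp add: P)
  hence BAP: "(B + A) ** (Y ** X) = (Y ** X) ** (B + A)"
    by (simp add: XY add.commute)
  have injXY: "inj_on (\<lambda>(x, y). x * y) (mat_spectrum X \<times> mat_spectrum Y)"
    using inj by (simp add: X_def Y_def)
  hence injYX: "inj_on (\<lambda>(x, y). x * y) (mat_spectrum Y \<times> mat_spectrum X)"
    unfolding inj_on_def by (auto simp: mult.commute)
  show ?thesis
    unfolding X_def[symmetric] Y_def[symmetric]
    using char_subspace_invariant[OF AX] char_subspace_invariant[OF BY]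
      char_subspace_invariant_from_product[OF XY AX ABP injXY]
      char_subspace_invariant_from_product[OF XY[symmetric] BY BAP injYX]
    by blast
qed

end
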